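(* Fix a nonempty $A\subseteq S$ and $w\in A$, and let $E_0$ be the event $\{\tau_{\mathcal E_N^w}=\tau_{\mathcal E_N(A)}\}$. Let $x,y\in S$ be distinct with $r(x,y)+r(y,x)>0$. Then there exists $C>0$, independent of $N$ and $i$, such that for all $i\in\{1,\dots,N-1\}$, $$\Big|\mathbb P_{\zeta_i^{x,y}}[E_0]-\frac{r(x,y)}{r(x,y)+r(y,x)}\mathbb P_{\zeta_{i+1}^{x,y}}[E_0]-\frac{r(y,x)}{r(x,y)+r(y,x)}\mathbb P_{\zeta_{i-1}^{x,y}}[E_0]\Big|\le C\frac{d_NN}{i(N-i)}.$$
   Context: $S$ is finite; $r:S\times S\to[0,\infty)$, $r(x,x)=0$, are the rates of an irreducible continuous-time Markov chain on $S$. $\mathcal H_N=\{\eta\in\{0,1,2,\dots\}^S:\sum_x\eta_x=N\}$; $\sigma^{x,y}\eta$ moves one particle from $x$ to $y$ (if $\eta_x\ge1$; else $\sigma^{x,y}\eta=\eta$). With $d_N>0$, $d_N\to0$, the inclusion process is the Markov chain on $\mathcal H_N$ with generator $(\mathcal L_NF)(\eta)=\sum_{x\ne y}\eta_x(d_N+\eta_y)r(x,y)\{F(\sigma^{x,y}\eta)-F(\eta)\}$; $\mathbb P_\eta$ its law from $\eta$; $\tau_{\mathcal C}$ the hitting time of $\mathcal C\subseteq\mathcal H_N$. $\xi_N^z$: all $N$ particles at $z$; $\mathcal E_N^z=\{\xi_N^z\}$, $\mathcal E_N(A)=\bigcup_{z\in A}\mathcal E_N^z$. For $0\le i\le N$,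 $\zeta_i^{x,y}$ is the configuration with $N-i$ particles at $x$, $i$ at $y$, and none elsewhere. *)

theory Defs
  imports "HOL-Analysis.Analysis"
begin

definition irreducible_rates :: "('s \<Rightarrow> 's \<Rightarrow> real) \<Rightarrow> bool" where
  "irreducible_rates r \<longleftrightarrow> (\<forall>a b. (a, b) \<in> {(u, v). r u v > 0}\<^sup>*)"

definition sigma :: "'s \<Rightarrow> 's \<Rightarrow> ('s \<Rightarrow> nat) \<Rightarrow> ('s \<Rightarrow> nat)" where
  "sigma x y \<eta> = (if 1 \<le> \<eta> x then \<eta>(x := \<eta> x - 1, y := \<eta> y + 1) else \<eta>)"

text \<open>Jump rate eta -> sigma x y eta of the inclusion process with parameter dN.\<close>
definition incl_rate :: "real \<Rightarrow> ('s \<Rightarrow> 's \<Rightarrow> real) \<Rightarrow> 's \<Rightarrow> 's \<Rightarrow> ('s \<Rightarrow> nat) \<Rightarrow> real" where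
  "incl_rate dN r x y \<eta> = real (\<eta> x) * (dN + real (\<eta> y)) * r x y"

definition incl_total_rate :: "real \<Rightarrow> ('s::finite \<Rightarrow> 's \<Rightarrow> real) \<Rightarrow> ('s \<Rightarrow> nat) \<Rightarrow> real" where
  "incl_total_rate dN r \<eta> = (\<Sum>(x, y)\<in>{(x, y). x \<noteq> y}. incl_rate dN r x y \<eta>)"

text \<open>hit_within dN r B g n eta: probability that the (embedded jump chain of the)
  inclusion process started at eta hits B within n jumps and the configuration at
  the hitting time of B is g.\<close>
fun hit_within :: "real \<Rightarrow> ('s::finite \<Rightarrow> 's \<Rightarrow> real) \<Rightarrow> ('s \<Rightarrow> nat) set \<Rightarrow> ('s \<Rightarrow> nat)
    \<Rightarrow> nat \<Rightarrow> ('s \<Rightarrow> nat) \<Rightarrow> real" where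
  "hit_within dN r B g 0 \<eta> = (if \<eta> \<in> B \<and> \<eta> = g then 1 else 0)"
| "hit_within dN r B g (Suc n) \<eta> =
     (if \<eta> \<in> B then (if \<eta> = g then 1 else 0)
      else (\<Sum>(x, y)\<in>{(x, y). x \<noteq> y}.
              incl_rate dN r x y \<eta> / incl_total_rate dN r \<eta> * hit_within dN r B g n (sigma x y \<eta>)))"

text \<open>P_eta[ tau_{B} < infinity and X(tau_B) = g ] as the (monotone) limit.\<close>
definition hit_at_prob :: "real \<Rightarrow> ('s::finite \<Rightarrow> 's \<Rightarrow> real) \<Rightarrow> ('s \<Rightarrow> nat) set \<Rightarrow> ('s \<Rightarrow> nat)
    \<Rightarrow> ('s \<Rightarrow> nat) \<Rightarrow> real" where
  "hit_at_prob dN r B g \<eta> = lim (\<lambda>n. hit_within dN r B g n \<eta>)"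

definition xi :: "nat \<Rightarrow> 's \<Rightarrow> ('s \<Rightarrow> nat)" where
  "xi N z = (\<lambda>u. if u = z then N else 0)"

definition zeta :: "nat \<Rightarrow> nat \<Rightarrow> 's \<Rightarrow> 's \<Rightarrow> ('s \<Rightarrow> nat)" where
  "zeta N i x y = (\<lambda>u. if u = x then N - i else if u = y then i else 0)"

text \<open>P_eta[E_0], E_0 = {tau_{E_N^w} = tau_{E_N(A)}}: the process reaches E_N(A) first at xi_N^w.\<close>
definition E0_prob :: "(nat \<Rightarrow> real) \<Rightarrow> ('s::finite \<Rightarrow> 's \<Rightarrow> real) \<Rightarrow> nat \<Rightarrow> 's set \<Rightarrow> 's
    \<Rightarrow> ('s \<Rightarrow> nat) \<Rightarrow> real" where
  "E0_prob d r N A w \<eta> = hit_at_prob (d N) r (xi N ` A) (xi N w) \<eta>"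

end

theory Submission imports Defs begin

text \<open>From a configuration \<open>\<eta>\<close> the inclusion process jumps from \<open>p\<close> to \<open>q\<close> at rate
  \<open>\<eta>\<^sub>p \<eta>\<^sub>q r(p,q) + d\<^sub>N \<eta>\<^sub>p r(p,q)\<close>. At \<open>\<zeta>\<^sub>i\<close> the interaction part \<open>\<eta>\<^sub>p \<eta>\<^sub>q r(p,q)\<close> only moves a
  particle between \<open>x\<close> and \<open>y\<close>, with total rate \<open>i(N-i)(r(x,y)+r(y,x))\<close>, while the free part
  has total rate at most \<open>d\<^sub>N N \<Sum> r\<close>. One-step analysis writes the hitting probability at
  \<open>\<zeta>\<^sub>i\<close> as an average of values in \<open>[0,1]\<close> with these weights, and dropping the free part
  changes such an average by at most the ratio of the two total rates.\<close>

lemma incl_rate_nonneg: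
  assumes "\<forall>a b. 0 \<le> r a b" and "0 \<le> dN"
  shows "0 \<le> incl_rate dN r p q \<eta>"
  using assms unfolding incl_rate_def by simp

lemma incl_rate_eq_interaction_plus_free:
  "incl_rate dN r p q \<eta> = real (\<eta> p) * real (\<eta> q) * r p q + dN * real (\<eta> p) * r p q"
  unfolding incl_rate_def by (simp add: algebra_simps)

lemma jump_prob_nonneg:
  assumes "\<forall>a b. 0 \<le> r a b" and "0 \<le> dN"
  shows "0 \<le> incl_rate dN r p q \<eta> / incl_total_rate dN r \<eta>"
  unfolding incl_total_rate_def
  using incl_rate_nonneg[OF assms] by (auto intro!: divide_nonneg_nonneg sum_nonneg)

lemma jump_probs_sum_le_one:
  assumes "\<forall>a b. 0 \<le> r a b" and "0 \<le> dN"
  shows "(\<Sum>(p, q)\<in>{(p, q). p \<noteq> q}. incl_rate dN r p q \<eta> / incl_total_rate dN r \<eta>) \<le> 1"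
proof -
  have "(\<Sum>(p, q)\<in>{(p, q). p \<noteq> q}. incl_rate dN r p q \<eta> / incl_total_rate dN r \<eta>)
      = incl_total_rate dN r \<eta> / incl_total_rate dN r \<eta>"
    unfolding incl_total_rate_def sum_divide_distrib by (simp add: case_prod_unfold)
  also have "\<dots> \<le> 1"
    by (cases "incl_total_rate dN r \<eta> = 0") auto
  finally show ?thesis .
qed

lemma hit_within_in_unit_interval:
  assumes "\<forall>a b. 0 \<le> r a b" and "0 \<le> dN"
  shows "0 \<le> hit_within dN r B g n \<eta> \<and> hit_within dN r B g n \<eta> \<le> 1"
proof (induction n arbitrary: \<eta>)
  case 0
  then show ?case by simp
next
  case (Suc n)
  define jp where "jp p q = incl_rate dN r p q \<eta> / incl_total_rate dN r \<eta>" for p q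
  have jp_nonneg: "0 \<le> jp p q" for p q
    unfolding jp_def by (rule jump_prob_nonneg[OF assms])
  have "0 \<le> (\<Sum>(p, q)\<in>{(p, q). p \<noteq> q}. jp p q * hit_within dN r B g n (sigma p q \<eta>))"
    using jp_nonneg Suc.IH by (auto intro!: sum_nonneg)
  moreover have "(\<Sum>(p, q)\<in>{(p, q). p \<noteq> q}. jp p q * hit_within dN r B g n (sigma p q \<eta>))
      \<le> (\<Sum>(p, q)\<in>{(p, q). p \<noteq> q}. jp p q)"
    unfolding case_prod_unfold using jp_nonneg Suc.IH by (intro sum_mono mult_left_le) auto
  ultimately show ?case
    using jump_probs_sum_le_one[OF assms, of \<eta>] unfolding jp_def by auto
qed

lemma hit_within_Suc_mono:
  assumes "\<forall>a b. 0 \<le> r a b" and "0 \<le> dN"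
  shows "hit_within dN r B g n \<eta> \<le> hit_within dN r B g (Suc n) \<eta>"
proof (induction n arbitrary: \<eta>)
  case 0
  show ?case
    using hit_within_in_unit_interval[OF assms] jump_prob_nonneg[OF assms]
    by (auto intro!: sum_nonneg)
next
  case (Suc n)
  have "(\<Sum>(p, q)\<in>{(p, q). p \<noteq> q}.
          incl_rate dN r p q \<eta> / incl_total_rate dN r \<eta> * hit_within dN r B g n (sigma p q \<eta>))
      \<le> (\<Sum>(p, q)\<in>{(p, q). p \<noteq> q}.
          incl_rate dN r p q \<eta> / incl_total_rate dN r \<eta> * hit_within dN r B g (Suc n) (sigma p q \<eta>))"
    unfolding case_prod_unfold
    by (intro sum_mono mult_left_mono Suc.IH jump_prob_nonneg[OF assms])
  then show ?case
    by (simp only: hit_within.simps(2)[of _ _ _ _ n] hit_within.simps(2)[of _ _ _ _ "Suc n"]) simp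
qed

lemma hit_within_tendsto_hit_at_prob:
  assumes "\<forall>a b. 0 \<le> r a b" and "0 \<le> dN"
  shows "(\<lambda>n. hit_within dN r B g n \<eta>) \<longlonglongrightarrow> hit_at_prob dN r B g \<eta>"
proof -
  have "incseq (\<lambda>n. hit_within dN r B g n \<eta>)"
    by (rule incseq_SucI) (rule hit_within_Suc_mono[OF assms])
  then have "convergent (\<lambda>n. hit_within dN r B g n \<eta>)"
    using incseq_convergent[of _ 1] hit_within_in_unit_interval[OF assms]
    by (meson convergentI)
  then show ?thesis
    unfolding hit_at_prob_def by (simp add: convergent_LIMSEQ_iff)
qed

lemma hit_at_prob_in_unit_interval:
  assumes "\<forall>a b. 0 \<le> r a b" and "0 \<le> dN"
  shows "0 \<le> hit_at_prob dN r B g \<eta> \<and> hit_at_prob dN r B g \<eta> \<le> 1"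
  using hit_within_tendsto_hit_at_prob[OF assms] hit_within_in_unit_interval[OF assms]
  by (meson LIMSEQ_le_const LIMSEQ_le_const2)

lemma hit_at_prob_one_step:
  assumes "\<forall>a b. 0 \<le> r a b" and "0 \<le> dN" and "\<eta> \<notin> B"
  shows "hit_at_prob dN r B g \<eta> = (\<Sum>(p, q)\<in>{(p, q). p \<noteq> q}.
      incl_rate dN r p q \<eta> / incl_total_rate dN r \<eta> * hit_at_prob dN r B g (sigma p q \<eta>))"
proof -
  have "(\<lambda>n. hit_within dN r B g (Suc n) \<eta>) \<longlonglongrightarrow> hit_at_prob dN r B g \<eta>"
    using LIMSEQ_Suc[OF hit_within_tendsto_hit_at_prob[OF assms(1,2)]] .
  moreover have "(\<lambda>n. hit_within dN r B g (Suc n) \<eta>) \<longlonglongrightarrow> (\<Sum>(p, q)\<in>{(p, q). p \<noteq> q}.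
      incl_rate dN r p q \<eta> / incl_total_rate dN r \<eta> * hit_at_prob dN r B g (sigma p q \<eta>))"
    unfolding hit_within.simps(2)[of dN r B g _ \<eta>] if_not_P[OF assms(3)] case_prod_unfold
    by (intro tendsto_sum tendsto_mult tendsto_const hit_within_tendsto_hit_at_prob[OF assms(1,2)])
  ultimately show ?thesis
    using LIMSEQ_unique by blast
qed

lemma weighted_average_perturbation:
  fixes a e f :: "'i \<Rightarrow> real"
  assumes "finite I" and "\<And>k. k \<in> I \<Longrightarrow> 0 \<le> a k" and "\<And>k. k \<in> I \<Longrightarrow> 0 \<le> e k"
    and "\<And>k. k \<in> I \<Longrightarrow> 0 \<le> f k \<and> f k \<le> 1" and "0 < sum a I"
  shows "\<bar>(\<Sum>k\<in>I. (a k + e k) * f k) / (\<Sum>k\<in>I. a k + e k) - (\<Sum>k\<in>I. a k * f k) / sum a I\<bar>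
    \<le> sum e I / sum a I"
proof -
  define A E m s where "A = sum a I" and "E = sum e I"
    and "m = (\<Sum>k\<in>I. a k * f k) / A" and "s = (\<Sum>k\<in>I. e k * f k)"
  have A_pos: "0 < A" and E_nonneg: "0 \<le> E"
    using assms by (simp_all add: A_def E_def sum_nonneg)
  have "0 \<le> (\<Sum>k\<in>I. a k * f k)" "(\<Sum>k\<in>I. a k * f k) \<le> A"
    using assms by (auto simp: A_def intro!: sum_nonneg sum_mono mult_left_le)
  then have m_unit: "0 \<le> m" "m \<le> 1"
    using A_pos by (simp_all add: m_def)
  have s_bounds: "0 \<le> s" "s \<le> E"
    using assms by (auto simp: s_def E_def intro!: sum_nonneg sum_mono mult_left_le)
  have "(\<Sum>k\<in>I. (a k + e k) * f k) = m * A + s"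
    using A_pos by (simp add: m_def s_def distrib_right sum.distrib)
  moreover have "(\<Sum>k\<in>I. a k + e k) = A + E"
    by (simp add: A_def E_def sum.distrib)
  moreover have "(m * A + s) / (A + E) - m = (s - m * E) / (A + E)"
    using A_pos E_nonneg by (simp add: field_simps)
  moreover have "\<bar>s - m * E\<bar> \<le> E"
  proof -
    have "0 \<le> m * E" "m * E \<le> E"
      using m_unit E_nonneg by (simp_all add: mult_left_le_one_le)
    then show ?thesis
      using s_bounds unfolding abs_le_iff by linarith
  qed
  ultimately have "\<bar>(\<Sum>k\<in>I. (a k + e k) * f k) / (\<Sum>k\<in>I. a k + e k) - m\<bar> \<le> E / (A + E)"
    using A_pos E_nonneg by (simp add: divide_right_mono)
  also have "\<dots> \<le> E / A"
    using A_pos E_nonneg by (intro divide_left_mono) auto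
  finally show ?thesis
    unfolding m_def A_def E_def .
qed

lemma zeta_le_total:
  assumes "i \<le> N"
  shows "zeta N i x y p \<le> N"
  using assms unfolding zeta_def by auto

lemma sigma_zeta_forward:
  assumes "x \<noteq> y" and "i < N"
  shows "sigma x y (zeta N i x y) = zeta N (i + 1) x y"
  using assms unfolding sigma_def zeta_def by (auto simp: fun_eq_iff)

lemma sigma_zeta_backward:
  assumes "x \<noteq> y" and "0 < i" and "i \<le> N"
  shows "sigma y x (zeta N i x y) = zeta N (i - 1) x y"
  using assms unfolding sigma_def zeta_def by (auto simp: fun_eq_iff)

lemma zeta_not_in_range_xi:
  assumes "x \<noteq> y" and "0 < i" and "i < N"
  shows "zeta N i x y \<notin> range (xi N)"
proof
  assume "zeta N i x y \<in> range (xi N)"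
  then obtain z where "zeta N i x y = xi N z"
    by blast
  then have "zeta N i x y x = xi N z x" and "zeta N i x y y = xi N z y"
    by simp_all
  then show False
    using assms unfolding zeta_def xi_def by (auto split: if_splits)
qed

lemma hit_at_prob_zeta_near_two_point_average:
  fixes r :: "'s::finite \<Rightarrow> 's \<Rightarrow> real"
  assumes r_nonneg: "\<forall>a b. 0 \<le> r a b" and "0 \<le> dN" and "x \<noteq> y" and "0 < r x y + r y x"
    and "0 < i" and "i < N" and "zeta N i x y \<notin> B"
  shows "\<bar>hit_at_prob dN r B g (zeta N i x y)
      - r x y / (r x y + r y x) * hit_at_prob dN r B g (zeta N (i + 1) x y)
      - r y x / (r x y + r y x) * hit_at_prob dN r B g (zeta N (i - 1) x y)\<bar>
    \<le> dN * real N * (\<Sum>(p, q)\<in>{(p, q). p \<noteq> q}. r p q)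
      / (real i * real (N - i) * (r x y + r y x))"
proof -
  let ?P = "{(p, q). p \<noteq> q} :: ('s \<times> 's) set"
  define \<eta> where "\<eta> = zeta N i x y"
  define h where "h = hit_at_prob dN r B g"
  define R where "R = r x y + r y x"
  define u where "u = real i * real (N - i)"
  define a where "a = (\<lambda>(p, q). real (\<eta> p) * real (\<eta> q) * r p q)"
  define e where "e = (\<lambda>(p, q). dN * real (\<eta> p) * r p q)"
  define f where "f = (\<lambda>(p, q). h (sigma p q \<eta>))"
  have u_pos: "0 < u" and R_pos: "0 < R"
    using assms by (simp_all add: u_def R_def)
  have a_concentrated: "(\<Sum>k\<in>?P. a k * \<phi> k) = u * (r x y * \<phi> (x, y) + r y x * \<phi> (y, x))"
    for \<phi> :: "'s \<times> 's \<Rightarrow> real"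
  proof -
    have "(\<Sum>k\<in>?P. a k * \<phi> k) = (\<Sum>k\<in>{(x, y), (y, x)}. a k * \<phi> k)"
      by (rule sum.mono_neutral_right)
        (use assms(3) in \<open>auto simp: a_def \<eta>_def zeta_def split: if_splits\<close>)
    also have "\<dots> = u * (r x y * \<phi> (x, y) + r y x * \<phi> (y, x))"
      using assms(3) by (simp add: a_def \<eta>_def zeta_def u_def algebra_simps)
    finally show ?thesis .
  qed
  have "h \<eta> = (\<Sum>(p, q)\<in>?P. incl_rate dN r p q \<eta> * h (sigma p q \<eta>)) / incl_total_rate dN r \<eta>"
    using hit_at_prob_one_step[OF r_nonneg assms(2), of \<eta> B g] assms(7)
    by (simp add: h_def \<eta>_def sum_divide_distrib case_prod_unfold)
  then have h_average: "h \<eta> = (\<Sum>k\<in>?P. (a k + e k) * f k) / (\<Sum>k\<in>?P. a k + e k)"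
    by (simp add: incl_total_rate_def incl_rate_eq_interaction_plus_free a_def e_def f_def
        case_prod_unfold)
  have sum_a: "sum a ?P = u * R"
    using a_concentrated[of "\<lambda>_. 1"] by (simp add: R_def algebra_simps)
  have "(\<Sum>k\<in>?P. a k * f k)
      = u * (r x y * h (zeta N (i + 1) x y) + r y x * h (zeta N (i - 1) x y))"
    using a_concentrated[of f] assms(3,5,6)
    by (simp add: f_def \<eta>_def sigma_zeta_forward sigma_zeta_backward)
  then have two_point: "(\<Sum>k\<in>?P. a k * f k) / sum a ?P
      = r x y / R * h (zeta N (i + 1) x y) + r y x / R * h (zeta N (i - 1) x y)"
    using u_pos R_pos by (simp add: sum_a field_simps)
  have e_bound: "sum e ?P \<le> dN * real N * (\<Sum>(p, q)\<in>?P. r p q)"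
    unfolding sum_distrib_left e_def case_prod_unfold \<eta>_def
    using r_nonneg assms(2) zeta_le_total[of i N] assms(6)
    by (intro sum_mono mult_right_mono mult_left_mono) auto
  have "\<bar>h \<eta> - (\<Sum>k\<in>?P. a k * f k) / sum a ?P\<bar> \<le> sum e ?P / sum a ?P"
    unfolding h_average
  proof (rule weighted_average_perturbation)
    show "0 < sum a ?P"
      using u_pos R_pos by (simp add: sum_a)
  qed (use r_nonneg assms(2) hit_at_prob_in_unit_interval[OF r_nonneg assms(2)]
      in \<open>auto simp: a_def e_def f_def h_def\<close>)
  also have "\<dots> \<le> dN * real N * (\<Sum>(p, q)\<in>?P. r p q) / (u * R)"
    using e_bound u_pos R_pos by (simp add: sum_a divide_right_mono)
  finally show ?thesis
    unfolding two_point diff_diff_eq by (simp add: h_def \<eta>_def u_def R_def)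
qed

theorem lemma4p7:
  fixes r :: "'s::finite \<Rightarrow> 's \<Rightarrow> real" and d :: "nat \<Rightarrow> real"
    and A :: "'s set" and w x y :: 's
  assumes "\<forall>a b. 0 \<le> r a b" and "\<forall>a. r a a = 0" and "irreducible_rates r"
    and "\<forall>N. 0 < d N" and "d \<longlonglongrightarrow> 0"
    and "A \<noteq> {}" and "w \<in> A"
    and "x \<noteq> y" and "r x y + r y x > 0"
  shows "\<exists>C>0. \<forall>N i. 1 \<le> i \<and> i \<le> N - 1 \<longrightarrow>
     \<bar>E0_prob d r N A w (zeta N i x y)
      - r x y / (r x y + r y x) * E0_prob d r N A w (zeta N (i + 1) x y)
      - r y x / (r x y + r y x) * E0_prob d r N A w (zeta N (i - 1) x y)\<bar>
     \<le> C * (d N * real N / (real i * real (N - i)))"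
proof -
  define R where "R = r x y + r y x"
  define \<Sigma>r where "\<Sigma>r = (\<Sum>(p, q)\<in>{(p, q). p \<noteq> q}. r p q)"
  have "R = (\<Sum>(p, q)\<in>{(x, y), (y, x)}. r p q)"
    using assms(8) by (simp add: R_def)
  also have "\<dots> \<le> \<Sigma>r"
    unfolding \<Sigma>r_def using assms(1,8) by (intro sum_mono2) auto
  finally have "0 < \<Sigma>r / R"
    using assms(9) by (simp add: R_def)
  moreover have "\<bar>E0_prob d r N A w (zeta N i x y)
      - r x y / R * E0_prob d r N A w (zeta N (i + 1) x y)
      - r y x / R * E0_prob d r N A w (zeta N (i - 1) x y)\<bar>
      \<le> \<Sigma>r / R * (d N * real N / (real i * real (N - i)))"
    if "1 \<le> i \<and> i \<le> N - 1" for N i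
  proof -
    have "0 < i" "i < N"
      using that by auto
    moreover have "zeta N i x y \<notin> xi N ` A"
      using zeta_not_in_range_xi[OF assms(8) \<open>0 < i\<close> \<open>i < N\<close>] by blast
    ultimately show ?thesis
      using hit_at_prob_zeta_near_two_point_average[OF assms(1) less_imp_le[OF assms(4)[rule_format]]
          assms(8,9), where i = i and N = N and B = "xi N ` A" and g = "xi N w"]
      by (simp add: E0_prob_def R_def \<Sigma>r_def mult.commute)
  qed
  ultimately show ?thesis
    unfolding R_def by blast
qed

end
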